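(* Every WHB-algebra $\mathbf A$ is isomorphic to a subalgebra of $\mathcal A(\mathcal F(\mathbf A))=(\mathrm{Up}(X(\mathbf A)),\cap,\cup,\Rightarrow_{R_{\mathbf A}},\Leftarrow_{S_{\mathbf A}},\emptyset,X(\mathbf A))$.
   Context: A WHB-algebra is an algebra $(A,\wedge,\vee,\to,\leftarrow,0,1)$ such that $(A,\wedge,\vee,0,1)$ is a bounded distributive lattice and for all $a,b,c\in A$: $a\to a=1$; $a\to(b\wedge c)=(a\to b)\wedge(a\to c)$; $(a\vee b)\to c=(a\to c)\wedge(b\to c)$; $(a\to b)\wedge(b\to c)\le a\to c$; $a\leftarrow a=0$; $(a\vee b)\leftarrow c=(a\leftarrow c)\vee(b\leftarrow c)$; $a\leftarrow(b\wedge c)=(a\leftarrow b)\vee(a\leftarrow c)$; $a\leftarrow c\le(a\leftarrow b)\vee(b\leftarrow c)$; $a\wedge((a\to b)\leftarrow 0)\le b$; $a\le b\vee(1\to(a\leftarrow b))$. $X(\mathbf A)$ is the set of prime filters of $\mathbf A$, ordered by inclusion; $\mathrm{Up}(X(\mathbf A))$ is the set of its upsets. $(P,Q)\in R_{\mathbf A}$ iff for all $a,b$, $a\to b\in P$ and $a\in Q$ imply $b\in Q$; $(P,Q)\in S_{\mathbf A}$ iff for all $a,b$, $a\in Q$ and $b\notin Q$ imply $a\leftarrow b\in P$. $\mathcal F(\mathbf A)=(X(\mathbf A),\subseteq,R_{\mathbf A},S_{\mathbf A})$. For upsets $U,V$: $U\Rightarrow_R V=\{x\colon R(x)\cap U\subseteq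 V\}$ and $U\Leftarrow_S V=\{x\colon S(x)\cap(U\setminus V)\neq\emptyset\}$, where $\mathcal R(x)=\{y\colon(x,y)\in\mathcal R\}$. *)

theory Defs
  imports Main
begin

record 'a whb =
  wcar :: "'a set"
  wmeet :: "'a \<Rightarrow> 'a \<Rightarrow> 'a"
  wjoin :: "'a \<Rightarrow> 'a \<Rightarrow> 'a"
  wimp :: "'a \<Rightarrow> 'a \<Rightarrow> 'a"
  wcoimp :: "'a \<Rightarrow> 'a \<Rightarrow> 'a"
  wbot :: "'a"
  wtop :: "'a"

definition wle :: "'a whb \<Rightarrow> 'a \<Rightarrow> 'a \<Rightarrow> bool" where
  "wle A a b \<longleftrightarrow> wmeet A a b = a"

definition bdl :: "'a whb \<Rightarrow> bool" where
  "bdl A \<longleftrightarrow>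
    wbot A \<in> wcar A \<and> wtop A \<in> wcar A \<and>
    (\<forall>a\<in>wcar A. \<forall>b\<in>wcar A. wmeet A a b \<in> wcar A \<and> wjoin A a b \<in> wcar A) \<and>
    (\<forall>a\<in>wcar A. \<forall>b\<in>wcar A.
        wmeet A a b = wmeet A b a \<and> wjoin A a b = wjoin A b a \<and>
        wmeet A a (wjoin A a b) = a \<and> wjoin A a (wmeet A a b) = a) \<and>
    (\<forall>a\<in>wcar A. \<forall>b\<in>wcar A. \<forall>c\<in>wcar A.
        wmeet A a (wmeet A b c) = wmeet A (wmeet A a b) c \<and>
        wjoin A a (wjoin A b c) = wjoin A (wjoin A a b) c \<and>
        wmeet A a (wjoin A b c) = wjoin A (wmeet A a b) (wmeet A a c)) \<and>
    (\<forall>a\<in>wcar A. wjoin A a (wbot A) = a \<and> wmeet A a (wtop A) = a)"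

definition whb_algebra :: "'a whb \<Rightarrow> bool" where
  "whb_algebra A \<longleftrightarrow> bdl A \<and>
    (\<forall>a\<in>wcar A. \<forall>b\<in>wcar A. wimp A a b \<in> wcar A \<and> wcoimp A a b \<in> wcar A) \<and>
    (\<forall>a\<in>wcar A. wimp A a a = wtop A \<and> wcoimp A a a = wbot A) \<and>
    (\<forall>a\<in>wcar A. \<forall>b\<in>wcar A. \<forall>c\<in>wcar A.
        wimp A a (wmeet A b c) = wmeet A (wimp A a b) (wimp A a c) \<and>
        wimp A (wjoin A a b) c = wmeet A (wimp A a c) (wimp A b c) \<and>
        wle A (wmeet A (wimp A a b) (wimp A b c)) (wimp A a c) \<and>
        wcoimp A (wjoin A a b) c = wjoin A (wcoimp A a c) (wcoimp A b c) \<and>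
        wcoimp A a (wmeet A b c) = wjoin A (wcoimp A a b) (wcoimp A a c) \<and>
        wle A (wcoimp A a c) (wjoin A (wcoimp A a b) (wcoimp A b c))) \<and>
    (\<forall>a\<in>wcar A. \<forall>b\<in>wcar A.
        wle A (wmeet A a (wcoimp A (wimp A a b) (wbot A))) b \<and>
        wle A a (wjoin A b (wimp A (wtop A) (wcoimp A a b))))"

definition prime_filter :: "'a whb \<Rightarrow> 'a set \<Rightarrow> bool" where
  "prime_filter A P \<longleftrightarrow> P \<subseteq> wcar A \<and> wtop A \<in> P \<and> wbot A \<notin> P \<and>
    (\<forall>a\<in>P. \<forall>b\<in>wcar A. wle A a b \<longrightarrow> b \<in> P) \<and>
    (\<forall>a\<in>P. \<forall>b\<in>P. wmeet A a b \<in> P) \<and>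
    (\<forall>a\<in>wcar A. \<forall>b\<in>wcar A. wjoin A a b \<in> P \<longrightarrow> a \<in> P \<or> b \<in> P)"

definition Xp :: "'a whb \<Rightarrow> 'a set set" where
  "Xp A = {P. prime_filter A P}"

definition Up :: "'a whb \<Rightarrow> 'a set set set" where
  "Up A = {U. U \<subseteq> Xp A \<and> (\<forall>P\<in>U. \<forall>Q\<in>Xp A. P \<subseteq> Q \<longrightarrow> Q \<in> U)}"

definition R_A :: "'a whb \<Rightarrow> ('a set \<times> 'a set) set" where
  "R_A A = {(P, Q). P \<in> Xp A \<and> Q \<in> Xp A \<and>
     (\<forall>a\<in>wcar A. \<forall>b\<in>wcar A. wimp A a b \<in> P \<and> a \<in> Q \<longrightarrow> b \<in> Q)}"

definition S_A :: "'a whb \<Rightarrow> ('a set \<times> 'a set) set" where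
  "S_A A = {(P, Q). P \<in> Xp A \<and> Q \<in> Xp A \<and>
     (\<forall>a\<in>wcar A. \<forall>b\<in>wcar A. a \<in> Q \<and> b \<notin> Q \<longrightarrow> wcoimp A a b \<in> P)}"

definition impR :: "'a whb \<Rightarrow> 'a set set \<Rightarrow> 'a set set \<Rightarrow> 'a set set" where
  "impR A U V = {x \<in> Xp A. {y \<in> Xp A. (x, y) \<in> R_A A} \<inter> U \<subseteq> V}"

definition coimpS :: "'a whb \<Rightarrow> 'a set set \<Rightarrow> 'a set set \<Rightarrow> 'a set set" where
  "coimpS A U V = {x \<in> Xp A. {y \<in> Xp A. (x, y) \<in> S_A A} \<inter> (U - V) \<noteq> {}}"

text \<open>h embeds A into the complex algebra of its canonical frame: an injective
  homomorphism into Up(X(A)) (its image is then a subalgebra isomorphic to A).\<close>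
definition embeds_into_complex :: "'a whb \<Rightarrow> ('a \<Rightarrow> 'a set set) \<Rightarrow> bool" where
  "embeds_into_complex A h \<longleftrightarrow>
     inj_on h (wcar A) \<and> h ` wcar A \<subseteq> Up A \<and>
     h (wbot A) = {} \<and> h (wtop A) = Xp A \<and>
     (\<forall>a\<in>wcar A. \<forall>b\<in>wcar A.
        h (wmeet A a b) = h a \<inter> h b \<and>
        h (wjoin A a b) = h a \<union> h b \<and>
        h (wimp A a b) = impR A (h a) (h b) \<and>
        h (wcoimp A a b) = coimpS A (h a) (h b))"

end

(*
  The representation map sends a to the set of prime filters containing it.  It preserves
  the lattice operations by primeness and is injective by the prime filter theorem.  For the
  two implications, one inclusion is immediate from the definitions of R and S; the other needs
  a relative prime filter theorem: if a binary relation T on A contains the order, is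
  transitive, and satisfies T x y, T x z ==> T x (y meet z) and T x z, T y z ==> T (x join y) z,
  then from not T a b Zorn's lemma yields a T-closed prime filter containing a but not b.
  Applied to T x y := (x -> y) in P and to T x y := (x <- y) notin P, this produces the
  R- and S-successors of P that witness the failure resp. validity of the implications.
*)
theory Submission
  imports Defs
begin

locale bdl_carrier =
  fixes A :: "'a whb"
  assumes bdl: "bdl A"
begin

abbreviation "C \<equiv> wcar A"
abbreviation "meet \<equiv> wmeet A"
abbreviation "join \<equiv> wjoin A"
abbreviation le_A (infix "\<preceq>" 50) where "x \<preceq> y \<equiv> wle A x y"

lemma bot_closed: "wbot A \<in> C"
  and top_closed: "wtop A \<in> C"
  and meet_closed: "x \<in> C \<Longrightarrow> y \<in> C \<Longrightarrow> meet x y \<in> C"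
  and join_closed: "x \<in> C \<Longrightarrow> y \<in> C \<Longrightarrow> join x y \<in> C"
  and meet_comm: "x \<in> C \<Longrightarrow> y \<in> C \<Longrightarrow> meet x y = meet y x"
  and join_comm: "x \<in> C \<Longrightarrow> y \<in> C \<Longrightarrow> join x y = join y x"
  and meet_join_absorb: "x \<in> C \<Longrightarrow> y \<in> C \<Longrightarrow> meet x (join x y) = x"
  and join_meet_absorb: "x \<in> C \<Longrightarrow> y \<in> C \<Longrightarrow> join x (meet x y) = x"
  and meet_assoc: "x \<in> C \<Longrightarrow> y \<in> C \<Longrightarrow> z \<in> C \<Longrightarrow> meet x (meet y z) = meet (meet x y) z"
  and meet_join_distrib: "x \<in> C \<Longrightarrow> y \<in> C \<Longrightarrow> z \<in> C \<Longrightarrow>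
      meet x (join y z) = join (meet x y) (meet x z)"
  and join_bot: "x \<in> C \<Longrightarrow> join x (wbot A) = x"
  and meet_top: "x \<in> C \<Longrightarrow> meet x (wtop A) = x"
  using bdl unfolding bdl_def by blast+

lemma meet_idem: "x \<in> C \<Longrightarrow> meet x x = x"
  by (metis meet_join_absorb join_meet_absorb meet_closed)

lemma le_refl: "x \<in> C \<Longrightarrow> x \<preceq> x"
  by (simp add: wle_def meet_idem)

lemma le_antisym: "x \<in> C \<Longrightarrow> y \<in> C \<Longrightarrow> x \<preceq> y \<Longrightarrow> y \<preceq> x \<Longrightarrow> x = y"
  by (metis wle_def meet_comm)

lemma le_trans: "x \<in> C \<Longrightarrow> y \<in> C \<Longrightarrow> z \<in> C \<Longrightarrow> x \<preceq> y \<Longrightarrow> y \<preceq> z \<Longrightarrow> x \<preceq> z"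
  by (metis wle_def meet_assoc)

lemma meet_le1: "x \<in> C \<Longrightarrow> y \<in> C \<Longrightarrow> meet x y \<preceq> x"
  unfolding wle_def by (metis meet_assoc meet_comm meet_idem)

lemma meet_le2: "x \<in> C \<Longrightarrow> y \<in> C \<Longrightarrow> meet x y \<preceq> y"
  unfolding wle_def by (metis meet_assoc meet_idem)

lemma le_meetI: "x \<in> C \<Longrightarrow> y \<in> C \<Longrightarrow> z \<in> C \<Longrightarrow> z \<preceq> x \<Longrightarrow> z \<preceq> y \<Longrightarrow> z \<preceq> meet x y"
  unfolding wle_def by (metis meet_assoc)

lemma meet_mono_left: "x \<in> C \<Longrightarrow> y \<in> C \<Longrightarrow> z \<in> C \<Longrightarrow> x \<preceq> y \<Longrightarrow> meet x z \<preceq> meet y z"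
  by (meson le_meetI le_trans meet_le1 meet_le2 meet_closed)

lemma le_top: "x \<in> C \<Longrightarrow> x \<preceq> wtop A"
  by (simp add: wle_def meet_top)

lemma bot_le: "x \<in> C \<Longrightarrow> wbot A \<preceq> x"
  unfolding wle_def by (metis meet_join_absorb join_bot join_comm bot_closed)

lemma join_ge1: "x \<in> C \<Longrightarrow> y \<in> C \<Longrightarrow> x \<preceq> join x y"
  by (simp add: wle_def meet_join_absorb)

lemma join_ge2: "x \<in> C \<Longrightarrow> y \<in> C \<Longrightarrow> y \<preceq> join x y"
  by (metis join_ge1 join_comm)

lemma le_joinI: "x \<in> C \<Longrightarrow> y \<in> C \<Longrightarrow> z \<in> C \<Longrightarrow> x \<preceq> z \<Longrightarrow> y \<preceq> z \<Longrightarrow> join x y \<preceq> z"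
  unfolding wle_def by (metis meet_join_distrib meet_comm join_closed)

lemma prime_filterD:
  assumes "prime_filter A P"
  shows "P \<subseteq> C" "wtop A \<in> P" "wbot A \<notin> P"
    "x \<in> P \<Longrightarrow> y \<in> C \<Longrightarrow> x \<preceq> y \<Longrightarrow> y \<in> P"
    "x \<in> P \<Longrightarrow> y \<in> P \<Longrightarrow> meet x y \<in> P"
    "x \<in> C \<Longrightarrow> y \<in> C \<Longrightarrow> join x y \<in> P \<Longrightarrow> x \<in> P \<or> y \<in> P"
  using assms unfolding prime_filter_def by blast+

lemma prime_filter_meet_iff:
  "prime_filter A P \<Longrightarrow> x \<in> C \<Longrightarrow> y \<in> C \<Longrightarrow> meet x y \<in> P \<longleftrightarrow> x \<in> P \<and> y \<in> P"
  by (meson prime_filterD meet_le1 meet_le2)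

lemma prime_filter_join_iff:
  "prime_filter A P \<Longrightarrow> x \<in> C \<Longrightarrow> y \<in> C \<Longrightarrow> join x y \<in> P \<longleftrightarrow> x \<in> P \<or> y \<in> P"
  by (meson prime_filterD join_ge1 join_ge2 join_closed)

end

locale compatible_preorder = bdl_carrier +
  fixes T :: "'a \<Rightarrow> 'a \<Rightarrow> bool"
  assumes T_of_le: "x \<in> C \<Longrightarrow> y \<in> C \<Longrightarrow> x \<preceq> y \<Longrightarrow> T x y"
    and T_trans: "x \<in> C \<Longrightarrow> y \<in> C \<Longrightarrow> z \<in> C \<Longrightarrow> T x y \<Longrightarrow> T y z \<Longrightarrow> T x z"
    and T_meet: "x \<in> C \<Longrightarrow> y \<in> C \<Longrightarrow> z \<in> C \<Longrightarrow> T x y \<Longrightarrow> T x z \<Longrightarrow> T x (meet y z)"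
    and T_join: "x \<in> C \<Longrightarrow> y \<in> C \<Longrightarrow> z \<in> C \<Longrightarrow> T x z \<Longrightarrow> T y z \<Longrightarrow> T (join x y) z"
begin

definition T_filter :: "'a set \<Rightarrow> bool" where
  "T_filter G \<longleftrightarrow> G \<subseteq> C \<and> (\<forall>x\<in>G. \<forall>y\<in>C. T x y \<longrightarrow> y \<in> G) \<and> (\<forall>x\<in>G. \<forall>y\<in>G. meet x y \<in> G)"

lemma le_T_trans: "u \<in> C \<Longrightarrow> v \<in> C \<Longrightarrow> z \<in> C \<Longrightarrow> u \<preceq> v \<Longrightarrow> T v z \<Longrightarrow> T u z"
  using T_of_le T_trans by blast

lemma T_filter_principal: "a \<in> C \<Longrightarrow> T_filter {y \<in> C. T a y}"
  unfolding T_filter_def by (auto intro: T_meet meet_closed dest: T_trans[of a, rotated 3])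

lemma T_filter_Union_chain:
  assumes filters: "\<forall>G\<in>\<G>. T_filter G" and chain: "\<forall>X\<in>\<G>. \<forall>Y\<in>\<G>. X \<subseteq> Y \<or> Y \<subseteq> X"
  shows "T_filter (\<Union>\<G>)"
  unfolding T_filter_def
proof (intro conjI ballI impI)
  show "\<Union>\<G> \<subseteq> C" using filters unfolding T_filter_def by auto
  show "y \<in> \<Union>\<G>" if "x \<in> \<Union>\<G>" "y \<in> C" "T x y" for x y
    using filters that unfolding T_filter_def by auto
  show "meet x y \<in> \<Union>\<G>" if "x \<in> \<Union>\<G>" "y \<in> \<Union>\<G>" for x y
  proof -
    obtain X Y where XY: "X \<in> \<G>" "Y \<in> \<G>" "x \<in> X" "y \<in> Y" using \<open>x \<in> \<Union>\<G>\<close> \<open>y \<in> \<Union>\<G>\<close> by blast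
    then have "X \<union> Y \<in> \<G>" using chain by (metis sup.absorb1 sup.absorb2)
    then have "T_filter (X \<union> Y)" using filters by blast
    then have "meet x y \<in> X \<union> Y" using XY unfolding T_filter_def by blast
    then show ?thesis using \<open>X \<union> Y \<in> \<G>\<close> by blast
  qed
qed

lemma T_filter_adjoin:
  assumes M: "T_filter M" and x: "x \<in> C"
  defines "Mx \<equiv> {z \<in> C. \<exists>g\<in>M. T (meet g x) z}"
  shows "T_filter Mx" and "M \<subseteq> Mx" and "M \<noteq> {} \<Longrightarrow> x \<in> Mx"
proof -
  have MC: "M \<subseteq> C" and M_meet: "\<And>g g'. g \<in> M \<Longrightarrow> g' \<in> M \<Longrightarrow> meet g g' \<in> M"
    using M unfolding T_filter_def by auto
  have gx_closed: "meet g x \<in> C" if "g \<in> M" for g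
    using that MC x meet_closed by auto
  have "meet z w \<in> Mx" if z: "z \<in> Mx" and w: "w \<in> Mx" for z w
  proof -
    obtain g g' where g: "g \<in> M" "T (meet g x) z" and g': "g' \<in> M" "T (meet g' x) w"
      and zw: "z \<in> C" "w \<in> C"
      using z w unfolding Mx_def by auto
    define h where "h = meet g g'"
    have h: "h \<in> M" "h \<in> C" using g g' M_meet MC unfolding h_def by auto
    have gC: "g \<in> C" "g' \<in> C" using g g' MC by auto
    then have "h \<preceq> g" "h \<preceq> g'" unfolding h_def using meet_le1 meet_le2 by auto
    then have "meet h x \<preceq> meet g x" "meet h x \<preceq> meet g' x"
      using meet_mono_left h gC x by auto
    then have "T (meet h x) z" "T (meet h x) w"
      using le_T_trans g g' zw gx_closed h by auto
    then have "T (meet h x) (meet z w)"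
      using T_meet gx_closed h zw by auto
    then show ?thesis
      using h zw meet_closed unfolding Mx_def by auto
  qed
  moreover have "y \<in> Mx" if z: "z \<in> Mx" and y: "y \<in> C" "T z y" for z y
  proof -
    obtain g where "g \<in> M" "T (meet g x) z" "z \<in> C"
      using z unfolding Mx_def by auto
    then show ?thesis
      using T_trans[of "meet g x" z y] y gx_closed unfolding Mx_def by auto
  qed
  ultimately show "T_filter Mx"
    unfolding T_filter_def Mx_def by auto
  show "M \<subseteq> Mx"
  proof
    fix g assume "g \<in> M"
    then have "T (meet g x) g" using T_of_le meet_le1 MC x gx_closed by auto
    then show "g \<in> Mx" unfolding Mx_def using \<open>g \<in> M\<close> MC by auto
  qed
  show "x \<in> Mx" if "M \<noteq> {}"
  proof -
    obtain g where "g \<in> M" using \<open>M \<noteq> {}\<close> by blast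
    then have "T (meet g x) x" using T_of_le meet_le2 MC x gx_closed by auto
    then show ?thesis unfolding Mx_def using \<open>g \<in> M\<close> x by auto
  qed
qed

lemma maximal_T_filter_prime:
  assumes M: "T_filter M" and a: "a \<in> M" and b: "b \<in> C" "b \<notin> M"
    and maximal: "\<And>G. T_filter G \<Longrightarrow> b \<notin> G \<Longrightarrow> M \<subseteq> G \<Longrightarrow> G = M"
  shows "prime_filter A M"
proof -
  have MC: "M \<subseteq> C" and M_T: "\<And>x y. x \<in> M \<Longrightarrow> y \<in> C \<Longrightarrow> T x y \<Longrightarrow> y \<in> M"
    and M_meet: "\<And>x y. x \<in> M \<Longrightarrow> y \<in> M \<Longrightarrow> meet x y \<in> M"
    using M unfolding T_filter_def by auto
  have reaches_b: "\<exists>g\<in>M. T (meet g x) b" if x: "x \<in> C" "x \<notin> M" for x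
  proof (rule ccontr)
    assume "\<not> (\<exists>g\<in>M. T (meet g x) b)"
    then have "b \<notin> {z \<in> C. \<exists>g\<in>M. T (meet g x) z}" by blast
    then have "{z \<in> C. \<exists>g\<in>M. T (meet g x) z} = M"
      using maximal T_filter_adjoin(1,2)[OF M x(1)] by blast
    moreover have "x \<in> {z \<in> C. \<exists>g\<in>M. T (meet g x) z}"
      using T_filter_adjoin(3)[OF M x(1)] a by blast
    ultimately show False using x(2) by blast
  qed
  have "x \<in> M \<or> y \<in> M" if xy: "x \<in> C" "y \<in> C" "join x y \<in> M" for x y
  proof (rule ccontr)
    assume "\<not> (x \<in> M \<or> y \<in> M)"
    then obtain g g' where g: "g \<in> M" "T (meet g x) b" and g': "g' \<in> M" "T (meet g' y) b"
      using reaches_b xy by meson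
    define h where "h = meet g g'"
    have gC: "g \<in> C" "g' \<in> C" using g g' MC by auto
    have h: "h \<in> M" "h \<in> C" using g g' M_meet MC unfolding h_def by auto
    have "h \<preceq> g" "h \<preceq> g'" unfolding h_def using meet_le1 meet_le2 gC by auto
    then have "meet h x \<preceq> meet g x" "meet h y \<preceq> meet g' y"
      using meet_mono_left h gC xy by auto
    then have "T (meet h x) b" "T (meet h y) b"
      using le_T_trans[OF meet_closed meet_closed b(1)] g(2) g'(2) gC h(2) xy by blast+
    then have "T (join (meet h x) (meet h y)) b"
      using T_join h xy b meet_closed by auto
    then have "T (meet h (join x y)) b"
      using meet_join_distrib h xy by auto
    moreover have "meet h (join x y) \<in> M" using M_meet h xy by auto
    ultimately show False using M_T b by auto
  qed
  moreover have "wtop A \<in> M" using M_T[OF a top_closed] T_of_le le_top MC a top_closed by auto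
  moreover have "wbot A \<notin> M" using M_T[of "wbot A" b] T_of_le bot_le bot_closed b by auto
  moreover have "y \<in> M" if "x \<in> M" "y \<in> C" "x \<preceq> y" for x y
    using M_T T_of_le MC that by auto
  ultimately show ?thesis
    unfolding prime_filter_def using MC M_meet by auto
qed

theorem prime_filter_extension:
  assumes "a \<in> C" "b \<in> C" "\<not> T a b"
  shows "\<exists>Q. prime_filter A Q \<and> a \<in> Q \<and> b \<notin> Q \<and> (\<forall>x\<in>Q. \<forall>y\<in>C. T x y \<longrightarrow> y \<in> Q)"
proof -
  let ?S = "{G. T_filter G \<and> a \<in> G \<and> b \<notin> G}"
  have "{y \<in> C. T a y} \<in> ?S"
    using T_filter_principal T_of_le le_refl assms by auto
  moreover have "\<Union>\<G> \<in> ?S" if "\<G> \<noteq> {}" "subset.chain ?S \<G>" for \<G>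
  proof -
    have "\<forall>G\<in>\<G>. T_filter G" "\<forall>X\<in>\<G>. \<forall>Y\<in>\<G>. X \<subseteq> Y \<or> Y \<subseteq> X"
      using that(2) unfolding subset_chain_def by auto
    then have "T_filter (\<Union>\<G>)" by (rule T_filter_Union_chain)
    then show ?thesis using that unfolding subset_chain_def by auto
  qed
  ultimately obtain M where M: "M \<in> ?S" and maximal: "\<forall>G\<in>?S. M \<subseteq> G \<longrightarrow> G = M"
    using subset_Zorn_nonempty[of ?S] by blast
  then have "prime_filter A M"
    by (intro maximal_T_filter_prime[of M a b]) (use assms(2) in auto)
  with M show ?thesis unfolding T_filter_def by auto
qed

end

context bdl_carrier
begin

lemma compatible_preorder_le: "compatible_preorder A (\<preceq>)"
  by unfold_locales (auto intro: le_trans le_meetI le_joinI bdl)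

lemma prime_filter_separation:
  assumes "a \<in> C" "b \<in> C" "\<not> a \<preceq> b"
  shows "\<exists>P. prime_filter A P \<and> a \<in> P \<and> b \<notin> P"
  using compatible_preorder.prime_filter_extension[OF compatible_preorder_le assms] by blast

definition stone :: "'a \<Rightarrow> 'a set set" where
  "stone a = {P \<in> Xp A. a \<in> P}"

lemma inj_on_stone: "inj_on stone C"
proof (rule inj_onI)
  fix a b assume ab: "a \<in> C" "b \<in> C" and eq: "stone a = stone b"
  show "a = b"
  proof (rule ccontr)
    assume "a \<noteq> b"
    then have "\<not> a \<preceq> b \<or> \<not> b \<preceq> a" using le_antisym ab by blast
    then obtain P where "prime_filter A P" "a \<in> P \<longleftrightarrow> b \<notin> P"
      using prime_filter_separation ab by metis
    then show False using eq unfolding stone_def Xp_def by blast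
  qed
qed

lemma stone_Up: "stone a \<in> Up A"
  unfolding stone_def Up_def by blast

lemma stone_bot: "stone (wbot A) = {}"
  and stone_top: "stone (wtop A) = Xp A"
  using prime_filterD(2,3) unfolding stone_def Xp_def by auto

lemma stone_meet: "a \<in> C \<Longrightarrow> b \<in> C \<Longrightarrow> stone (meet a b) = stone a \<inter> stone b"
  and stone_join: "a \<in> C \<Longrightarrow> b \<in> C \<Longrightarrow> stone (join a b) = stone a \<union> stone b"
  using prime_filter_meet_iff prime_filter_join_iff unfolding stone_def Xp_def by auto

end

locale whb_carrier =
  fixes A :: "'a whb"
  assumes whb: "whb_algebra A"

sublocale whb_carrier \<subseteq> bdl_carrier
  using whb unfolding whb_algebra_def by unfold_locales blast

context whb_carrier
begin

abbreviation "imp \<equiv> wimp A"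
abbreviation "coimp \<equiv> wcoimp A"

lemma imp_closed: "x \<in> C \<Longrightarrow> y \<in> C \<Longrightarrow> imp x y \<in> C"
  and coimp_closed: "x \<in> C \<Longrightarrow> y \<in> C \<Longrightarrow> coimp x y \<in> C"
  and imp_self: "x \<in> C \<Longrightarrow> imp x x = wtop A"
  and coimp_self: "x \<in> C \<Longrightarrow> coimp x x = wbot A"
  and imp_meet: "x \<in> C \<Longrightarrow> y \<in> C \<Longrightarrow> z \<in> C \<Longrightarrow> imp x (meet y z) = meet (imp x y) (imp x z)"
  and imp_join: "x \<in> C \<Longrightarrow> y \<in> C \<Longrightarrow> z \<in> C \<Longrightarrow> imp (join x y) z = meet (imp x z) (imp y z)"
  and imp_trans: "x \<in> C \<Longrightarrow> y \<in> C \<Longrightarrow> z \<in> C \<Longrightarrow> meet (imp x y) (imp y z) \<preceq> imp x z"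
  and coimp_join: "x \<in> C \<Longrightarrow> y \<in> C \<Longrightarrow> z \<in> C \<Longrightarrow> coimp (join x y) z = join (coimp x z) (coimp y z)"
  and coimp_meet: "x \<in> C \<Longrightarrow> y \<in> C \<Longrightarrow> z \<in> C \<Longrightarrow> coimp x (meet y z) = join (coimp x y) (coimp x z)"
  and coimp_trans: "x \<in> C \<Longrightarrow> y \<in> C \<Longrightarrow> z \<in> C \<Longrightarrow> coimp x z \<preceq> join (coimp x y) (coimp y z)"
  using whb unfolding whb_algebra_def by blast+

lemma imp_eq_top_if_le:
  assumes "x \<in> C" "y \<in> C" "x \<preceq> y"
  shows "imp x y = wtop A"
proof -
  have "wtop A = imp x (meet x y)" using assms imp_self by (simp add: wle_def)
  also have "\<dots> = meet (wtop A) (imp x y)" using assms imp_meet imp_self by simp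
  also have "\<dots> = imp x y" using assms by (metis imp_closed meet_comm meet_top top_closed)
  finally show ?thesis by simp
qed

lemma coimp_eq_bot_if_le:
  assumes "x \<in> C" "y \<in> C" "x \<preceq> y"
  shows "coimp x y = wbot A"
proof -
  have "wbot A = coimp x (meet x y)" using assms coimp_self by (simp add: wle_def)
  also have "\<dots> = join (wbot A) (coimp x y)" using assms coimp_meet coimp_self by simp
  also have "\<dots> = coimp x y" using assms by (metis coimp_closed join_comm join_bot bot_closed)
  finally show ?thesis by simp
qed

lemma compatible_preorder_imp:
  assumes P: "prime_filter A P"
  shows "compatible_preorder A (\<lambda>x y. imp x y \<in> P)"
proof unfold_locales
  fix x y z assume xyz: "x \<in> C" "y \<in> C" "z \<in> C"
  show "imp x y \<in> P" if "x \<preceq> y"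
    using imp_eq_top_if_le prime_filterD(2)[OF P] xyz that by simp
  show "imp x z \<in> P" if "imp x y \<in> P" "imp y z \<in> P"
    using prime_filterD(4,5)[OF P] imp_trans imp_closed meet_closed xyz that by meson
  show "imp x (meet y z) \<in> P" if "imp x y \<in> P" "imp x z \<in> P"
    using prime_filterD(5)[OF P] imp_meet xyz that by simp
  show "imp (join x y) z \<in> P" if "imp x z \<in> P" "imp y z \<in> P"
    using prime_filterD(5)[OF P] imp_join xyz that by simp
qed

lemma compatible_preorder_coimp:
  assumes P: "prime_filter A P"
  shows "compatible_preorder A (\<lambda>x y. coimp x y \<notin> P)"
proof unfold_locales
  fix x y z assume xyz: "x \<in> C" "y \<in> C" "z \<in> C"
  show "coimp x y \<notin> P" if "x \<preceq> y"
    using coimp_eq_bot_if_le prime_filterD(3)[OF P] xyz that by simp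
  show "coimp x z \<notin> P" if "coimp x y \<notin> P" "coimp y z \<notin> P"
    using prime_filterD(4)[OF P] prime_filter_join_iff[OF P] coimp_trans coimp_closed join_closed
      xyz that by meson
  show "coimp x (meet y z) \<notin> P" if "coimp x y \<notin> P" "coimp x z \<notin> P"
    using prime_filter_join_iff[OF P] coimp_meet coimp_closed xyz that by simp
  show "coimp (join x y) z \<notin> P" if "coimp x z \<notin> P" "coimp y z \<notin> P"
    using prime_filter_join_iff[OF P] coimp_join coimp_closed xyz that by simp
qed

lemma imp_mem_prime_filter_iff:
  assumes P: "prime_filter A P" and ab: "a \<in> C" "b \<in> C"
  shows "imp a b \<in> P \<longleftrightarrow> (\<forall>Q. (P, Q) \<in> R_A A \<longrightarrow> a \<in> Q \<longrightarrow> b \<in> Q)"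
proof
  show "\<forall>Q. (P, Q) \<in> R_A A \<longrightarrow> a \<in> Q \<longrightarrow> b \<in> Q" if "imp a b \<in> P"
    using that ab unfolding R_A_def by blast
  show "imp a b \<in> P" if R_succ: "\<forall>Q. (P, Q) \<in> R_A A \<longrightarrow> a \<in> Q \<longrightarrow> b \<in> Q"
  proof (rule ccontr)
    assume "imp a b \<notin> P"
    then obtain Q where Q: "prime_filter A Q" "a \<in> Q" "b \<notin> Q"
      and closed: "\<forall>x\<in>Q. \<forall>y\<in>C. imp x y \<in> P \<longrightarrow> y \<in> Q"
      using compatible_preorder.prime_filter_extension[OF compatible_preorder_imp[OF P] ab] by blast
    have "(P, Q) \<in> R_A A"
      unfolding R_A_def Xp_def using P Q(1) closed by blast
    then show False using R_succ Q by blast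
  qed
qed

lemma coimp_mem_prime_filter_iff:
  assumes P: "prime_filter A P" and ab: "a \<in> C" "b \<in> C"
  shows "coimp a b \<in> P \<longleftrightarrow> (\<exists>Q. (P, Q) \<in> S_A A \<and> a \<in> Q \<and> b \<notin> Q)"
proof
  show "coimp a b \<in> P" if "\<exists>Q. (P, Q) \<in> S_A A \<and> a \<in> Q \<and> b \<notin> Q"
    using that ab unfolding S_A_def by blast
  assume "coimp a b \<in> P"
  then obtain Q where Q: "prime_filter A Q" "a \<in> Q" "b \<notin> Q"
    and closed: "\<forall>x\<in>Q. \<forall>y\<in>C. coimp x y \<notin> P \<longrightarrow> y \<in> Q"
    using compatible_preorder.prime_filter_extension[OF compatible_preorder_coimp[OF P] ab] by blast
  have "(P, Q) \<in> S_A A"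
    unfolding S_A_def Xp_def using P Q(1) closed by blast
  with Q show "\<exists>Q. (P, Q) \<in> S_A A \<and> a \<in> Q \<and> b \<notin> Q" by blast
qed

lemma stone_imp:
  assumes "a \<in> C" "b \<in> C"
  shows "stone (imp a b) = impR A (stone a) (stone b)"
proof -
  have "(P, Q) \<in> R_A A \<Longrightarrow> Q \<in> Xp A" for P Q unfolding R_A_def by blast
  then show ?thesis
    using imp_mem_prime_filter_iff[OF _ assms] unfolding stone_def impR_def Xp_def by fastforce
qed

lemma stone_coimp:
  assumes "a \<in> C" "b \<in> C"
  shows "stone (coimp a b) = coimpS A (stone a) (stone b)"
proof -
  have "(P, Q) \<in> S_A A \<Longrightarrow> Q \<in> Xp A" for P Q unfolding S_A_def by blast
  then show ?thesis
    using coimp_mem_prime_filter_iff[OF _ assms] unfolding stone_def coimpS_def Xp_def by fastforce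
qed

lemma embeds_into_complex_stone: "embeds_into_complex A stone"
  unfolding embeds_into_complex_def
  using inj_on_stone stone_Up stone_bot stone_top stone_meet stone_join stone_imp stone_coimp
  by auto

end

theorem theorem4p10:
  fixes A :: "'a whb"
  assumes "whb_algebra A"
  shows "\<exists>h. embeds_into_complex A h"
proof -
  interpret whb_carrier A by unfold_locales (rule assms)
  show ?thesis using embeds_into_complex_stone by blast
qed

end
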